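(* In any finite ELP, let $Q\in\mathcal Q$ and let $\pi$ be a policy. Put $\rho_\pi(s,a)=\rho_\pi(s)\pi(a|s)$ and $\lambda_\pi(s,a)=\rho_\pi(s,a)\mathbb E_\pi[T]$. Then $$\mathcal L_\pi(Q,\bar\lambda)\le\mathcal L_\pi(Q,\lambda_\pi)\le\mathcal L_\pi(\bar Q,\lambda_\pi)\quad\text{for all }\bar Q\in\mathcal Q,\ \bar\lambda\ge0$$ if and only if all of the following hold: (1) $\mathcal BQ(s,a)-Q(s,a)\le0$ for all $(s,a)\in\mathcal S\times\mathcal A$; (2) $\rho_\pi(s,a)\big(\mathcal BQ(s,a)-Q(s,a)\big)=0$ for all $(s,a)$; (3) $\rho_\pi(s,a)\big(\max_{\bar a}Q(s,\bar a)-Q(s,a)\big)=0$ for all $s\notin\mathcal S_\bot$ and all $a\in\mathcal A$.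
   Context: A finite ELP is $(\mathcal S,\mathcal A,P,R,\rho)$ with finite $\mathcal S,\mathcal A$, reward $R:\mathcal S\to\mathbb R$, transitions $P(s'|s,a)$, distribution $\rho$, and nonempty terminal set $\mathcal S_\bot$. Under a policy $\pi$, $S_0$ is a fixed terminal state, $A_t\sim\pi(\cdot|S_t)$, $S_{t+1}\sim P(\cdot|S_t,A_t)$, and $T=\inf\{t\ge1:S_t\in\mathcal S_\bot\}$. ELP conditions: $\mathbb E_\pi[T]<\infty$ for every $\pi$; $P(s'|s,a)=\rho(s')$ for all $s\in\mathcal S_\bot$, all $a,s'$; every state is reachable under some policy. $\mathcal Q$ = all functions $\mathcal S\times\mathcal A\to\mathbb R$; $\bar\lambda\ge0$ ranges over functions $\mathcal S\times\mathcal A\to[0,\infty)$. $\mathcal BQ(s,a)=\sum_{s'}P(s'|s,a)\big(R(s')+\mathbf 1[s'\notin\mathcal S_\bot]\max_{a'}Q(s',a')\big)$. $\mathcal L_\pi(Q,\lambda)=\mathbb E_\pi[Q(S_T,A_T)]+\sum_{s,a}\lambda(s,a)(\mathcal BQ(s,a)-Q(s,a))$ with $A_T\sim\pi(\cdot|S_T)$. $\rho_\pi(s)$ is the unique stationary distribution of the Markov chain on $\mathcal S$ with kernel $\sum_aP(s'|s,a)\pi(a|s)$. *)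

theory Defs
  imports Complex_Main
begin

text \<open>Finite ELP: states 's, actions 'a (finite types).
  P s a s' = P(s'|s,a); policies pol s a = pol(a|s); Sbot the terminal set;
  s0 the fixed terminal start state S_0.\<close>

definition stoch_policy :: "('s::finite \<Rightarrow> 'a::finite \<Rightarrow> real) \<Rightarrow> bool" where
  "stoch_policy pol \<longleftrightarrow> (\<forall>s a. 0 \<le> pol s a) \<and> (\<forall>s. (\<Sum>a\<in>UNIV. pol s a) = 1)"

definition kernel_pi :: "('s::finite \<Rightarrow> 'a::finite \<Rightarrow> 's \<Rightarrow> real) \<Rightarrow> ('s \<Rightarrow> 'a \<Rightarrow> real) \<Rightarrow> 's \<Rightarrow> 's \<Rightarrow> real" where
  "kernel_pi P pol s s' = (\<Sum>a\<in>UNIV. P s a s' * pol s a)"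

text \<open>state_prob: P_pi(S_n = s) for the (restarting) process started at s0.\<close>
fun state_prob :: "('s::finite \<Rightarrow> 'a::finite \<Rightarrow> 's \<Rightarrow> real) \<Rightarrow> ('s \<Rightarrow> 'a \<Rightarrow> real) \<Rightarrow> 's \<Rightarrow> nat \<Rightarrow> 's \<Rightarrow> real" where
  "state_prob P pol s0 0 s = (if s = s0 then 1 else 0)"
| "state_prob P pol s0 (Suc n) s' = (\<Sum>s\<in>UNIV. state_prob P pol s0 n s * kernel_pi P pol s s')"

text \<open>surv: P_pi(S_n = s and S_t \<notin> Sbot for all 1 \<le> t < n).\<close>
fun surv :: "('s::finite \<Rightarrow> 'a::finite \<Rightarrow> 's \<Rightarrow> real) \<Rightarrow> 's set \<Rightarrow> ('s \<Rightarrow> 'a \<Rightarrow> real) \<Rightarrow> 's \<Rightarrow> nat \<Rightarrow> 's \<Rightarrow> real" where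
  "surv P Sbot pol s0 0 s = (if s = s0 then 1 else 0)"
| "surv P Sbot pol s0 (Suc n) s' =
     (\<Sum>s\<in>UNIV. (if n = 0 \<or> s \<notin> Sbot then surv P Sbot pol s0 n s else 0) * kernel_pi P pol s s')"

text \<open>hit_prob n s = P_pi(T = n and S_T = s), T = inf{t \<ge> 1. S_t \<in> Sbot}.\<close>
definition hit_prob :: "('s::finite \<Rightarrow> 'a::finite \<Rightarrow> 's \<Rightarrow> real) \<Rightarrow> 's set \<Rightarrow> ('s \<Rightarrow> 'a \<Rightarrow> real) \<Rightarrow> 's \<Rightarrow> nat \<Rightarrow> 's \<Rightarrow> real" where
  "hit_prob P Sbot pol s0 n s = (if 1 \<le> n \<and> s \<in> Sbot then surv P Sbot pol s0 n s else 0)"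

definition finite_exp_T :: "('s::finite \<Rightarrow> 'a::finite \<Rightarrow> 's \<Rightarrow> real) \<Rightarrow> 's set \<Rightarrow> ('s \<Rightarrow> 'a \<Rightarrow> real) \<Rightarrow> 's \<Rightarrow> bool" where
  "finite_exp_T P Sbot pol s0 \<longleftrightarrow>
     summable (\<lambda>n. real n * (\<Sum>s\<in>UNIV. hit_prob P Sbot pol s0 n s)) \<and>
     (\<Sum>n. \<Sum>s\<in>UNIV. hit_prob P Sbot pol s0 n s) = 1"

definition exp_T :: "('s::finite \<Rightarrow> 'a::finite \<Rightarrow> 's \<Rightarrow> real) \<Rightarrow> 's set \<Rightarrow> ('s \<Rightarrow> 'a \<Rightarrow> real) \<Rightarrow> 's \<Rightarrow> real" where
  "exp_T P Sbot pol s0 = (\<Sum>n. real n * (\<Sum>s\<in>UNIV. hit_prob P Sbot pol s0 n s))"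

text \<open>E_pi[Q(S_T, A_T)] with A_T ~ pol(.|S_T).\<close>
definition exp_Q_T :: "('s::finite \<Rightarrow> 'a::finite \<Rightarrow> 's \<Rightarrow> real) \<Rightarrow> 's set \<Rightarrow> ('s \<Rightarrow> 'a \<Rightarrow> real) \<Rightarrow> 's \<Rightarrow> ('s \<Rightarrow> 'a \<Rightarrow> real) \<Rightarrow> real" where
  "exp_Q_T P Sbot pol s0 Q = (\<Sum>n. \<Sum>s\<in>UNIV. hit_prob P Sbot pol s0 n s * (\<Sum>a\<in>UNIV. pol s a * Q s a))"

definition elp :: "('s::finite \<Rightarrow> 'a::finite \<Rightarrow> 's \<Rightarrow> real) \<Rightarrow> ('s \<Rightarrow> real) \<Rightarrow> 's set \<Rightarrow> 's \<Rightarrow> bool" where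
  "elp P rho Sbot s0 \<longleftrightarrow>
     (\<forall>s a s'. 0 \<le> P s a s') \<and> (\<forall>s a. (\<Sum>s'\<in>UNIV. P s a s') = 1) \<and>
     (\<forall>s. 0 \<le> rho s) \<and> (\<Sum>s\<in>UNIV. rho s) = 1 \<and>
     Sbot \<noteq> {} \<and> s0 \<in> Sbot \<and>
     (\<forall>pol. stoch_policy pol \<longrightarrow> finite_exp_T P Sbot pol s0) \<and>
     (\<forall>s\<in>Sbot. \<forall>a s'. P s a s' = rho s') \<and>
     (\<forall>s. \<exists>pol n. stoch_policy pol \<and> 0 < state_prob P pol s0 n s)"

definition bellman :: "('s::finite \<Rightarrow> 'a::finite \<Rightarrow> 's \<Rightarrow> real) \<Rightarrow> ('s \<Rightarrow> real) \<Rightarrow> 's set \<Rightarrow> ('s \<Rightarrow> 'a \<Rightarrow> real) \<Rightarrow> 's \<Rightarrow> 'a \<Rightarrow> real" where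
  "bellman P R Sbot Q s a =
     (\<Sum>s'\<in>UNIV. P s a s' * (R s' + (if s' \<notin> Sbot then Max (range (Q s')) else 0)))"

definition lagr :: "('s::finite \<Rightarrow> 'a::finite \<Rightarrow> 's \<Rightarrow> real) \<Rightarrow> ('s \<Rightarrow> real) \<Rightarrow> 's set \<Rightarrow> 's \<Rightarrow> ('s \<Rightarrow> 'a \<Rightarrow> real)
     \<Rightarrow> ('s \<Rightarrow> 'a \<Rightarrow> real) \<Rightarrow> ('s \<Rightarrow> 'a \<Rightarrow> real) \<Rightarrow> real" where
  "lagr P R Sbot s0 pol Q lam = exp_Q_T P Sbot pol s0 Q +
     (\<Sum>s\<in>UNIV. \<Sum>a\<in>UNIV. lam s a * (bellman P R Sbot Q s a - Q s a))"

definition stat_dist :: "('s::finite \<Rightarrow> 'a::finite \<Rightarrow> 's \<Rightarrow> real) \<Rightarrow> ('s \<Rightarrow> 'a \<Rightarrow> real) \<Rightarrow> 's \<Rightarrow> real" where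
  "stat_dist P pol = (THE d. (\<forall>s. 0 \<le> d s) \<and> (\<Sum>s\<in>UNIV. d s) = 1 \<and>
       (\<forall>s'. d s' = (\<Sum>s\<in>UNIV. d s * kernel_pi P pol s s')))"

end

theory Submission
  imports Defs
begin

text \<open>
  Let \<open>\<nu>(s) = \<Sum>{P(S_n = s, T \<ge> n) | n \<ge> 1}\<close> be the occupation measure of one episode.
  Since the process restarts from \<open>\<rho>\<close> at terminal states, \<open>\<nu>\<close> is invariant for the
  state chain, has total mass \<open>E[T]\<close> and mass 1 on the terminal set. Every invariant
  measure \<open>\<mu>\<close> dominates \<open>\<mu>(S_\<bottom>) \<nu>\<close>, and the difference is an invariant measure
  vanishing on \<open>S_\<bottom>\<close>. It must be zero: its support would be a closed class avoiding
  \<open>S_\<bottom>\<close>, and a policy that reaches this class would never terminate from there.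
  Hence \<open>\<rho>_\<pi> = \<nu> / E[T]\<close> and \<open>\<lambda>_\<pi>(s,a) = \<nu>(s) \<pi>(a|s)\<close>.

  With this multiplier the Lagrangian is \<open>\<Sum>_s \<nu>(s) R(s)\<close> plus the nonnegative gap
  \<open>\<Sum>{\<nu>(s) \<pi>(a|s) (max Q(s,\<cdot>) - Q(s,a)) | s \<notin> S_\<bottom>}\<close>, which vanishes at \<open>Q = 0\<close>, so
  minimality in \<open>Q\<close> is condition (3). Maximality of \<open>\<Sum> \<lambda> (BQ - Q)\<close> over \<open>\<lambda> \<ge> 0\<close> is
  complementary slackness, i.e. conditions (1) and (2).
\<close>

section \<open>Tail-sum formula for the mean\<close>

lemma summable_of_summable_moment:
  fixes p :: "nat \<Rightarrow> real"
  assumes p_nonneg: "\<And>n. 0 \<le> p n" and moment: "summable (\<lambda>n. real n * p n)"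
  shows "summable p"
proof -
  have "norm (p (Suc n)) \<le> real (Suc n) * p (Suc n)" for n
    using p_nonneg[of "Suc n"] by (simp add: algebra_simps)
  moreover have "summable (\<lambda>n. real (Suc n) * p (Suc n))"
    using moment by (subst summable_Suc_iff)
  ultimately have "summable (\<lambda>n. p (Suc n))"
    by (rule summable_comparison_test'[rotated])
  then show ?thesis by (subst (asm) summable_Suc_iff)
qed

lemma tail_sums_moment:
  fixes p :: "nat \<Rightarrow> real"
  assumes p_nonneg: "\<And>n. 0 \<le> p n" and moment: "summable (\<lambda>n. real n * p n)"
  shows "(\<lambda>n. \<Sum>k. p (k + Suc n)) sums (\<Sum>n. real n * p n)"
proof -
  define t where "t n = (\<Sum>k. p (k + Suc n))" for n
  define m where "m N = (\<Sum>k<Suc N. real k * p k)" for N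
  have p_summable: "summable p"
    by (rule summable_of_summable_moment[OF p_nonneg moment])
  have shift_summable: "summable (\<lambda>k. p (k + n))" for n
    using p_summable by (rule summable_ignore_initial_segment)
  have t_Suc: "t N = p (Suc N) + t (Suc N)" for N
    using suminf_split_head[OF shift_summable[of "Suc N"]] by (simp add: t_def)
  have t_nonneg: "0 \<le> t N" for N
    unfolding t_def by (rule suminf_nonneg[OF shift_summable p_nonneg])
  have partial: "(\<Sum>n<N. t n) = m N + real N * t N" for N
  proof (induction N)
    case (Suc N)
    have "(\<Sum>n<Suc N. t n) = m N + real (Suc N) * (p (Suc N) + t (Suc N))"
      using Suc by (simp add: t_Suc[of N] algebra_simps)
    then show ?case by (simp add: m_def algebra_simps)
  qed (simp add: m_def)
  have tail_bound: "real N * t N \<le> (\<Sum>n. real n * p n) - m N" for N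
  proof -
    have "real N * t N = (\<Sum>k. real N * p (k + Suc N))"
      unfolding t_def by (rule suminf_mult[OF shift_summable, symmetric])
    also have "\<dots> \<le> (\<Sum>k. real (k + Suc N) * p (k + Suc N))"
    proof (rule suminf_le)
      show "summable (\<lambda>k. real (k + Suc N) * p (k + Suc N))"
        using moment by (rule summable_ignore_initial_segment)
      show "summable (\<lambda>k. real N * p (k + Suc N))"
        by (rule summable_mult[OF shift_summable])
    qed (simp add: mult_right_mono p_nonneg)
    also have "\<dots> = (\<Sum>n. real n * p n) - m N"
      using suminf_split_initial_segment[OF moment, of "Suc N"] by (simp add: m_def)
    finally show ?thesis .
  qed
  have lower: "\<forall>N. m N \<le> (\<Sum>n<N. t n)"
  proof
    fix N
    have "0 \<le> real N * t N" using t_nonneg[of N] by simp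
    then show "m N \<le> (\<Sum>n<N. t n)" unfolding partial[of N] by linarith
  qed
  have upper: "\<forall>N. (\<Sum>n<N. t n) \<le> (\<Sum>n. real n * p n)"
    using partial tail_bound by (metis add.commute le_diff_eq)
  have "m \<longlonglongrightarrow> (\<Sum>n. real n * p n)"
    unfolding m_def by (rule LIMSEQ_Suc[OF summable_LIMSEQ[OF moment]])
  then have "(\<lambda>N. \<Sum>n<N. t n) \<longlonglongrightarrow> (\<Sum>n. real n * p n)"
    by (rule tendsto_sandwich[OF always_eventually[OF lower] always_eventually[OF upper] _ tendsto_const])
  then show ?thesis by (simp add: sums_def t_def)
qed

section \<open>Complementary slackness\<close>

lemma sum_sum_nonneg_eq_0_iff:
  fixes f :: "'b \<Rightarrow> 'c \<Rightarrow> 'r::ordered_comm_monoid_add"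
  assumes "finite A" "finite B" and "\<And>x y. x \<in> A \<Longrightarrow> y \<in> B \<Longrightarrow> 0 \<le> f x y"
  shows "(\<Sum>x\<in>A. \<Sum>y\<in>B. f x y) = 0 \<longleftrightarrow> (\<forall>x\<in>A. \<forall>y\<in>B. f x y = 0)"
  using assms by (simp add: sum_nonneg_eq_0_iff sum_nonneg)

lemma nonneg_multipliers_maximal_iff:
  fixes D lam :: "'b::finite \<Rightarrow> 'c::finite \<Rightarrow> real"
  assumes lam_nonneg: "\<And>x y. 0 \<le> lam x y"
  shows "(\<forall>lb. (\<forall>x y. 0 \<le> lb x y) \<longrightarrow>
            (\<Sum>x\<in>UNIV. \<Sum>y\<in>UNIV. lb x y * D x y) \<le> (\<Sum>x\<in>UNIV. \<Sum>y\<in>UNIV. lam x y * D x y))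
     \<longleftrightarrow> (\<forall>x y. D x y \<le> 0) \<and> (\<forall>x y. lam x y * D x y = 0)"
proof
  let ?L = "\<lambda>lb. \<Sum>x\<in>UNIV. \<Sum>y\<in>UNIV. lb x y * D x y"
  assume max: "\<forall>lb. (\<forall>x y. 0 \<le> lb x y) \<longrightarrow> ?L lb \<le> ?L lam"
  have D_nonpos: "D i j \<le> 0" for i j
  proof (rule ccontr)
    assume "\<not> D i j \<le> 0"
    define M where "M = (\<bar>?L lam\<bar> + 1) / D i j"
    define lb where "lb x y = (if x = i then if y = j then M else 0 else 0)" for x y
    have "(\<Sum>y\<in>UNIV. lb x y * D x y) = (if x = i then M * D i j else 0)" for x
      by (cases "x = i") (simp_all add: lb_def if_distrib[of "\<lambda>z. z * _"] cong: if_cong)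
    then have "?L lb = \<bar>?L lam\<bar> + 1"
      using \<open>\<not> D i j \<le> 0\<close> by (simp add: M_def)
    moreover have "?L lb \<le> ?L lam"
      using max \<open>\<not> D i j \<le> 0\<close> by (simp add: lb_def M_def)
    ultimately show False by linarith
  qed
  have "0 \<le> ?L lam"
    using max by (auto dest: spec[of _ "\<lambda>_ _. 0"])
  moreover have "?L lam \<le> 0"
    using lam_nonneg D_nonpos by (intro sum_nonpos mult_nonneg_nonpos)
  ultimately have "(\<Sum>x\<in>UNIV. \<Sum>y\<in>UNIV. - (lam x y * D x y)) = 0"
    by (simp add: sum_negf)
  then have "\<forall>x y. lam x y * D x y = 0"
    using lam_nonneg D_nonpos
    by (subst (asm) sum_sum_nonneg_eq_0_iff) (simp_all add: mult_nonneg_nonpos)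
  with D_nonpos show "(\<forall>x y. D x y \<le> 0) \<and> (\<forall>x y. lam x y * D x y = 0)" by blast
next
  assume slack: "(\<forall>x y. D x y \<le> 0) \<and> (\<forall>x y. lam x y * D x y = 0)"
  then have "(\<Sum>x\<in>UNIV. \<Sum>y\<in>UNIV. lam x y * D x y) = 0"
    by (simp del: mult_eq_0_iff)
  with slack show "\<forall>lb. (\<forall>x y. 0 \<le> lb x y) \<longrightarrow>
            (\<Sum>x\<in>UNIV. \<Sum>y\<in>UNIV. lb x y * D x y) \<le> (\<Sum>x\<in>UNIV. \<Sum>y\<in>UNIV. lam x y * D x y)"
    by (auto intro!: sum_nonpos mult_nonneg_nonpos)
qed

section \<open>Survival and termination probabilities\<close>

lemma sum_UNIV_split:
  fixes f :: "'b::finite \<Rightarrow> 'r::comm_monoid_add"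
  shows "(\<Sum>x\<in>UNIV. f x) = (\<Sum>x\<in>A. f x) + (\<Sum>x\<in>-A. f x)"
  by (metis Compl_eq_Diff_UNIV finite sum.subset_diff top_greatest add.commute)

declare surv.simps [simp del]

locale finite_elp =
  fixes P :: "'s::finite \<Rightarrow> 'a::finite \<Rightarrow> 's \<Rightarrow> real"
    and rho :: "'s \<Rightarrow> real" and Sbot :: "'s set" and s0 :: 's
  assumes elp: "elp P rho Sbot s0"
begin

lemma P_nonneg: "0 \<le> P s a s'"
  using elp by (simp add: elp_def)

lemma P_sum_eq_1: "(\<Sum>s'\<in>UNIV. P s a s') = 1"
  using elp by (simp add: elp_def)

lemma P_terminal: "s \<in> Sbot \<Longrightarrow> P s a s' = rho s'"
  using elp by (simp add: elp_def)

lemma rho_sum_eq_1: "(\<Sum>s\<in>UNIV. rho s) = 1"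
  using elp by (simp add: elp_def)

lemma s0_terminal: "s0 \<in> Sbot"
  using elp by (simp add: elp_def)

lemma exp_T_finite: "stoch_policy q \<Longrightarrow> finite_exp_T P Sbot q s0"
  using elp by (simp add: elp_def)

lemma reachable: "\<exists>q n. stoch_policy q \<and> 0 < state_prob P q s0 n s"
  using elp by (simp add: elp_def)

lemma kernel_nonneg: "stoch_policy q \<Longrightarrow> 0 \<le> kernel_pi P q s s'"
  unfolding kernel_pi_def stoch_policy_def by (auto intro!: sum_nonneg simp: P_nonneg)

lemma kernel_sum_eq_1: "stoch_policy q \<Longrightarrow> (\<Sum>s'\<in>UNIV. kernel_pi P q s s') = 1"
  unfolding kernel_pi_def stoch_policy_def
  by (subst sum.swap) (simp add: P_sum_eq_1 flip: sum_distrib_right)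

lemma kernel_terminal: "stoch_policy q \<Longrightarrow> s \<in> Sbot \<Longrightarrow> kernel_pi P q s s' = rho s'"
  unfolding kernel_pi_def stoch_policy_def by (simp add: P_terminal flip: sum_distrib_left)

lemma sum_kernel_split:
  assumes "stoch_policy q"
  shows "(\<Sum>s\<in>UNIV. f s * kernel_pi P q s s') =
    (\<Sum>s\<in>Sbot. f s) * rho s' + (\<Sum>s\<in>-Sbot. f s * kernel_pi P q s s')"
  by (simp add: sum_UNIV_split[of _ Sbot] kernel_terminal[OF assms] sum_distrib_right)

lemma surv_nonneg: "stoch_policy q \<Longrightarrow> 0 \<le> surv P Sbot q s0 n s"
  by (induction n arbitrary: s) (auto simp: surv.simps intro!: sum_nonneg mult_nonneg_nonneg kernel_nonneg)

lemma state_prob_nonneg: "stoch_policy q \<Longrightarrow> 0 \<le> state_prob P q s0 n s"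
  by (induction n arbitrary: s) (auto intro!: sum_nonneg mult_nonneg_nonneg kernel_nonneg)

lemma surv_Suc_0: "stoch_policy q \<Longrightarrow> surv P Sbot q s0 (Suc 0) s = rho s"
  by (simp add: surv.simps kernel_terminal s0_terminal if_distrib[of "\<lambda>x. x * _"] cong: if_cong)

lemma surv_Suc_Suc:
  "surv P Sbot q s0 (Suc (Suc n)) s' = (\<Sum>s\<in>-Sbot. surv P Sbot q s0 (Suc n) s * kernel_pi P q s s')"
  by (simp add: surv.simps(2)[of _ _ _ _ "Suc n"] if_distrib[of "\<lambda>x. x * _"] sum.If_cases Collect_neg_eq
      cong: if_cong)

definition prob_T_gt :: "('s \<Rightarrow> 'a \<Rightarrow> real) \<Rightarrow> nat \<Rightarrow> real" where
  "prob_T_gt q n = (\<Sum>s\<in>UNIV. surv P Sbot q s0 (Suc n) s)"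

definition prob_T_eq :: "('s \<Rightarrow> 'a \<Rightarrow> real) \<Rightarrow> nat \<Rightarrow> real" where
  "prob_T_eq q n = (\<Sum>s\<in>UNIV. hit_prob P Sbot q s0 n s)"

lemma prob_T_eq_0: "prob_T_eq q 0 = 0"
  by (simp add: prob_T_eq_def hit_prob_def)

lemma prob_T_eq_Suc: "prob_T_eq q (Suc n) = (\<Sum>s\<in>Sbot. surv P Sbot q s0 (Suc n) s)"
  by (simp add: prob_T_eq_def hit_prob_def sum.If_cases)

lemma prob_T_eq_nonneg: "stoch_policy q \<Longrightarrow> 0 \<le> prob_T_eq q n"
  by (cases n) (simp_all add: prob_T_eq_0 prob_T_eq_Suc sum_nonneg surv_nonneg)

lemma prob_T_gt_nonneg: "stoch_policy q \<Longrightarrow> 0 \<le> prob_T_gt q n"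
  by (simp add: prob_T_gt_def sum_nonneg surv_nonneg)

lemma prob_T_gt_0: "stoch_policy q \<Longrightarrow> prob_T_gt q 0 = 1"
  by (simp add: prob_T_gt_def surv_Suc_0 rho_sum_eq_1)

lemma prob_T_gt_Suc:
  assumes q: "stoch_policy q"
  shows "prob_T_gt q (Suc n) = prob_T_gt q n - prob_T_eq q (Suc n)"
proof -
  have "prob_T_gt q (Suc n) =
      (\<Sum>s\<in>-Sbot. surv P Sbot q s0 (Suc n) s * (\<Sum>s'\<in>UNIV. kernel_pi P q s s'))"
    unfolding prob_T_gt_def surv_Suc_Suc by (subst sum.swap) (simp add: sum_distrib_left)
  also have "\<dots> = (\<Sum>s\<in>-Sbot. surv P Sbot q s0 (Suc n) s)"
    by (simp add: kernel_sum_eq_1[OF q])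
  finally show ?thesis
    unfolding prob_T_gt_def prob_T_eq_Suc by (simp add: sum_UNIV_split[of _ Sbot])
qed

lemma prob_T_gt_eq: "stoch_policy q \<Longrightarrow> prob_T_gt q n = 1 - (\<Sum>k<Suc n. prob_T_eq q k)"
  by (induction n) (simp_all add: prob_T_gt_0 prob_T_gt_Suc prob_T_eq_0)

lemma
  assumes "stoch_policy q"
  shows summable_prob_T_eq: "summable (prob_T_eq q)"
    and suminf_prob_T_eq: "(\<Sum>n. prob_T_eq q n) = 1"
    and prob_T_gt_sums: "prob_T_gt q sums exp_T P Sbot q s0"
proof -
  have moment: "summable (\<lambda>n. real n * prob_T_eq q n)"
    and total: "(\<Sum>n. prob_T_eq q n) = 1"
    using exp_T_finite[OF assms] by (simp_all add: finite_exp_T_def prob_T_eq_def)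
  show summable: "summable (prob_T_eq q)"
    by (rule summable_of_summable_moment[OF prob_T_eq_nonneg[OF assms] moment])
  show "(\<Sum>n. prob_T_eq q n) = 1" by (fact total)
  have "prob_T_gt q n = (\<Sum>k. prob_T_eq q (k + Suc n))" for n
    using suminf_split_initial_segment[OF summable, of "Suc n"] total prob_T_gt_eq[OF assms, of n]
    by linarith
  then have "prob_T_gt q = (\<lambda>n. \<Sum>k. prob_T_eq q (k + Suc n))" ..
  moreover have "exp_T P Sbot q s0 = (\<Sum>n. real n * prob_T_eq q n)"
    by (simp add: exp_T_def prob_T_eq_def)
  ultimately show "prob_T_gt q sums exp_T P Sbot q s0"
    using tail_sums_moment[OF prob_T_eq_nonneg[OF assms] moment] by simp
qed

lemma exp_T_ge_1: "stoch_policy q \<Longrightarrow> 1 \<le> exp_T P Sbot q s0"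
  using sum_le_suminf[OF sums_summable[OF prob_T_gt_sums], of q "{0}"]
  by (simp add: sums_unique[OF prob_T_gt_sums] prob_T_gt_0 prob_T_gt_nonneg)

end

section \<open>Invariant measures vanishing on the terminal set\<close>

definition invariant_measure ::
    "('s::finite \<Rightarrow> 'a::finite \<Rightarrow> 's \<Rightarrow> real) \<Rightarrow> ('s \<Rightarrow> 'a \<Rightarrow> real) \<Rightarrow> ('s \<Rightarrow> real) \<Rightarrow> bool" where
  "invariant_measure P q mu \<longleftrightarrow>
     (\<forall>s. 0 \<le> mu s) \<and> (\<forall>s'. mu s' = (\<Sum>s\<in>UNIV. mu s * kernel_pi P q s s'))"

lemma
  assumes "invariant_measure P q mu"
  shows invariant_measure_nonneg: "0 \<le> mu s"
    and invariant_measure_eq: "mu s' = (\<Sum>s\<in>UNIV. mu s * kernel_pi P q s s')"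
  using assms unfolding invariant_measure_def by blast+

context finite_elp
begin

lemma invariant_measure_support_closed:
  assumes q: "stoch_policy q" and mu: "invariant_measure P q mu"
    and "0 < mu s" and "mu s' = 0"
  shows "kernel_pi P q s s' = 0"
proof -
  have nonneg: "0 \<le> mu x * kernel_pi P q x s'" for x
    using invariant_measure_nonneg[OF mu] kernel_nonneg[OF q] by simp
  have "(\<Sum>x\<in>UNIV. mu x * kernel_pi P q x s') = 0"
    using invariant_measure_eq[OF mu, of s'] \<open>mu s' = 0\<close> by simp
  then have "mu s * kernel_pi P q s s' = 0"
    using nonneg by (simp add: sum_nonneg_eq_0_iff)
  with \<open>0 < mu s\<close> show ?thesis by simp
qed

lemma surv_closed_set_eq_0:
  assumes q: "stoch_policy q" and C_nonterminal: "C \<inter> Sbot = {}"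
    and C_closed: "\<And>s s'. s \<in> C \<Longrightarrow> s' \<notin> C \<Longrightarrow> kernel_pi P q s s' = 0"
    and "x \<in> C"
  shows "surv P Sbot q s0 (Suc N) x = 0"
proof -
  \<comment> \<open>The mass in \<open>C\<close> never decreases, yet it is bounded by \<open>P(T > n) \<longlonglongrightarrow> 0\<close>.\<close>
  define mass where "mass n = (\<Sum>s\<in>C. surv P Sbot q s0 (Suc n) s)" for n
  have kernel_C: "(\<Sum>s'\<in>C. kernel_pi P q s s') = 1" if "s \<in> C" for s
    using kernel_sum_eq_1[OF q, of s] sum_UNIV_split[of "kernel_pi P q s" C] C_closed[OF that]
    by simp
  have "mass n \<le> mass (Suc n)" for n
  proof -
    have "mass n = (\<Sum>s'\<in>C. \<Sum>s\<in>C. surv P Sbot q s0 (Suc n) s * kernel_pi P q s s')"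
      unfolding mass_def by (subst sum.swap) (simp add: kernel_C flip: sum_distrib_left)
    also have "\<dots> \<le> (\<Sum>s'\<in>C. \<Sum>s\<in>-Sbot. surv P Sbot q s0 (Suc n) s * kernel_pi P q s s')"
      using C_nonterminal
      by (intro sum_mono sum_mono2) (auto intro: mult_nonneg_nonneg surv_nonneg[OF q] kernel_nonneg[OF q])
    also have "\<dots> = mass (Suc n)"
      by (simp add: mass_def surv_Suc_Suc)
    finally show ?thesis .
  qed
  then have "mass N \<le> mass n" if "N \<le> n" for n
    using that by (rule incseqD[OF incseq_SucI])
  moreover have "mass n \<le> prob_T_gt q n" for n
    unfolding mass_def prob_T_gt_def by (rule sum_mono2) (simp_all add: surv_nonneg[OF q])
  ultimately have "mass N \<le> 0"
    using summable_LIMSEQ_zero[OF sums_summable[OF prob_T_gt_sums[OF q]]]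
    by (intro LIMSEQ_le_const[where X = "prob_T_gt q"]) (auto intro: order_trans)
  moreover have "surv P Sbot q s0 (Suc N) x \<le> mass N"
    unfolding mass_def using \<open>x \<in> C\<close> by (rule member_le_sum) (simp_all add: surv_nonneg[OF q])
  ultimately show ?thesis
    using surv_nonneg[OF q] by (simp add: order_antisym)
qed

lemma reachable_before_termination:
  assumes q: "stoch_policy q" and sig: "stoch_policy sig"
    and agree: "\<And>s s'. s \<notin> C \<Longrightarrow> kernel_pi P sig s s' = kernel_pi P q s s'"
    and "0 < state_prob P q s0 n x"
  shows "x \<in> Sbot \<or> (\<exists>m. 0 < surv P Sbot sig s0 (Suc m) x) \<or>
    (\<exists>m y. y \<in> C \<and> 0 < surv P Sbot sig s0 (Suc m) y)"
  using \<open>0 < state_prob P q s0 n x\<close>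
proof (induction n arbitrary: x)
  case 0
  then show ?case using s0_terminal by (simp split: if_splits)
next
  case (Suc n)
  have "\<exists>y. 0 < state_prob P q s0 n y * kernel_pi P q y x"
  proof (rule ccontr)
    assume "\<nexists>y. 0 < state_prob P q s0 n y * kernel_pi P q y x"
    then have "state_prob P q s0 (Suc n) x \<le> 0"
      by (simp add: sum_nonpos not_less)
    with Suc.prems show False by simp
  qed
  then obtain y where y: "0 < state_prob P q s0 n y * kernel_pi P q y x" ..
  then have y_reached: "0 < state_prob P q s0 n y" and step: "0 < kernel_pi P q y x"
    using state_prob_nonneg[OF q, of n y] kernel_nonneg[OF q, of y x] by (simp_all add: zero_less_mult_iff)
  from Suc.IH[OF y_reached]
  consider "y \<in> Sbot" | m where "y \<notin> Sbot" "0 < surv P Sbot sig s0 (Suc m) y"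
    | "\<exists>m y. y \<in> C \<and> 0 < surv P Sbot sig s0 (Suc m) y"
    by blast
  then show ?case
  proof cases
    case 1
    then have "0 < surv P Sbot sig s0 (Suc 0) x"
      using step by (simp add: surv_Suc_0[OF sig] kernel_terminal[OF q])
    then show ?thesis by blast
  next
    case (2 m)
    show ?thesis
    proof (cases "y \<in> C")
      case False
      have "surv P Sbot sig s0 (Suc m) y * kernel_pi P sig y x \<le> surv P Sbot sig s0 (Suc (Suc m)) x"
        unfolding surv_Suc_Suc using \<open>y \<notin> Sbot\<close>
        by (intro member_le_sum) (auto intro: mult_nonneg_nonneg surv_nonneg[OF sig] kernel_nonneg[OF sig])
      moreover have "0 < surv P Sbot sig s0 (Suc m) y * kernel_pi P sig y x"
        using 2 step agree[OF False] by simp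
      ultimately show ?thesis by (meson less_le_trans)
    qed (use 2 in blast)
  qed blast
qed

lemma invariant_measure_vanishes:
  assumes pol: "stoch_policy pol" and eta: "invariant_measure P pol eta"
    and terminal: "\<And>s. s \<in> Sbot \<Longrightarrow> eta s = 0"
  shows "eta c = 0"
proof (rule ccontr)
  define C where "C = {s. 0 < eta s}"
  assume "eta c \<noteq> 0"
  then have "c \<in> C" "c \<notin> Sbot"
    using invariant_measure_nonneg[OF eta, of c] terminal by (auto simp: C_def less_le)
  obtain q n where q: "stoch_policy q" and reach_c: "0 < state_prob P q s0 n c"
    using reachable by blast
  \<comment> \<open>Under \<open>sig\<close> the process enters \<open>C\<close> before terminating and then stays there forever.\<close>
  define sig where "sig s = (if s \<in> C then pol s else q s)" for s
  have sig: "stoch_policy sig"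
    using pol q by (simp add: stoch_policy_def sig_def)
  have kernel_sig: "kernel_pi P sig s = (if s \<in> C then kernel_pi P pol s else kernel_pi P q s)" for s
    by (simp add: sig_def kernel_pi_def fun_eq_iff)
  have C_nonterminal: "C \<inter> Sbot = {}"
    using terminal by (auto simp: C_def)
  have C_closed: "kernel_pi P sig s s' = 0" if "s \<in> C" "s' \<notin> C" for s s'
    using that invariant_measure_nonneg[OF eta, of s'] invariant_measure_support_closed[OF pol eta]
    by (simp add: kernel_sig C_def)
  have agree: "kernel_pi P sig s s' = kernel_pi P q s s'" if "s \<notin> C" for s s'
    using that by (simp add: kernel_sig)
  obtain m y where "y \<in> C" "0 < surv P Sbot sig s0 (Suc m) y"
    using reachable_before_termination[OF q sig agree reach_c] \<open>c \<in> C\<close> \<open>c \<notin> Sbot\<close> by blast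
  with surv_closed_set_eq_0[OF sig C_nonterminal C_closed] show False by force
qed

end

section \<open>The occupation measure\<close>

locale finite_elp_policy = finite_elp P rho Sbot s0
  for P :: "'s::finite \<Rightarrow> 'a::finite \<Rightarrow> 's \<Rightarrow> real" and rho Sbot s0 +
  fixes pol :: "'s \<Rightarrow> 'a \<Rightarrow> real"
  assumes pol: "stoch_policy pol"
begin

abbreviation mean_T :: real where
  "mean_T \<equiv> exp_T P Sbot pol s0"

text \<open>\<open>occupation s\<close> is the expected number of visits to \<open>s\<close> at times \<open>1, \<dots>, T\<close>.\<close>

definition occupation :: "'s \<Rightarrow> real" where
  "occupation s = (\<Sum>n. surv P Sbot pol s0 (Suc n) s)"

lemma mean_T_pos: "0 < mean_T"
  using exp_T_ge_1[OF pol] by simp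

lemma summable_surv: "summable (\<lambda>n. surv P Sbot pol s0 (Suc n) s)"
proof (rule summable_comparison_test'[OF sums_summable[OF prob_T_gt_sums[OF pol]]])
  show "norm (surv P Sbot pol s0 (Suc n) s) \<le> prob_T_gt pol n" for n
    unfolding prob_T_gt_def by (simp add: surv_nonneg[OF pol] member_le_sum)
qed

lemma occupation_nonneg: "0 \<le> occupation s"
  unfolding occupation_def by (rule suminf_nonneg[OF summable_surv surv_nonneg[OF pol]])

lemma sum_occupation: "(\<Sum>s\<in>A. occupation s) = (\<Sum>n. \<Sum>s\<in>A. surv P Sbot pol s0 (Suc n) s)"
  unfolding occupation_def by (rule suminf_sum[OF summable_surv, symmetric])

lemma sum_occupation_UNIV: "(\<Sum>s\<in>UNIV. occupation s) = mean_T"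
proof -
  have "(\<Sum>s\<in>UNIV. occupation s) = (\<Sum>n. prob_T_gt pol n)"
    by (simp add: sum_occupation prob_T_gt_def)
  then show ?thesis
    using sums_unique[OF prob_T_gt_sums[OF pol]] by simp
qed

lemma sum_occupation_terminal: "(\<Sum>s\<in>Sbot. occupation s) = 1"
  using suminf_split_head[OF summable_prob_T_eq[OF pol]]
  by (simp add: sum_occupation suminf_prob_T_eq[OF pol] prob_T_eq_Suc prob_T_eq_0)

lemma occupation_invariant: "invariant_measure P pol occupation"
  unfolding invariant_measure_def
proof (intro conjI allI occupation_nonneg)
  fix s'
  have "occupation s' = rho s' + (\<Sum>n. surv P Sbot pol s0 (Suc (Suc n)) s')"
    unfolding occupation_def using suminf_split_head[OF summable_surv, of s']
    by (simp add: surv_Suc_0[OF pol])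
  also have "(\<Sum>n. surv P Sbot pol s0 (Suc (Suc n)) s') = (\<Sum>s\<in>-Sbot. occupation s * kernel_pi P pol s s')"
    unfolding surv_Suc_Suc occupation_def
    by (simp add: suminf_sum summable_mult2[OF summable_surv] suminf_mult2[OF summable_surv])
  also have "rho s' + \<dots> = (\<Sum>s\<in>UNIV. occupation s * kernel_pi P pol s s')"
    by (simp add: sum_kernel_split[OF pol] sum_occupation_terminal)
  finally show "occupation s' = (\<Sum>s\<in>UNIV. occupation s * kernel_pi P pol s s')" .
qed

lemma invariant_measure_ge_occupation:
  assumes mu: "invariant_measure P pol mu"
  shows "(\<Sum>s\<in>Sbot. mu s) * occupation s' \<le> mu s'"
proof -
  let ?m = "\<Sum>s\<in>Sbot. mu s"
  have partial: "?m * (\<Sum>k<n. surv P Sbot pol s0 (Suc k) s') \<le> mu s'" for n s'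
  proof (induction n arbitrary: s')
    case 0
    show ?case using invariant_measure_nonneg[OF mu] by simp
  next
    case (Suc n)
    have "(\<Sum>k<Suc n. surv P Sbot pol s0 (Suc k) s') =
        rho s' + (\<Sum>s\<in>-Sbot. (\<Sum>k<n. surv P Sbot pol s0 (Suc k) s) * kernel_pi P pol s s')"
      unfolding sum.lessThan_Suc_shift surv_Suc_0[OF pol] surv_Suc_Suc sum_distrib_right
      by (subst sum.swap) (rule refl)
    then have "?m * (\<Sum>k<Suc n. surv P Sbot pol s0 (Suc k) s') =
        ?m * rho s' + (\<Sum>s\<in>-Sbot. (?m * (\<Sum>k<n. surv P Sbot pol s0 (Suc k) s)) * kernel_pi P pol s s')"
      by (simp add: distrib_left sum_distrib_left sum_distrib_right mult.assoc)
    also have "\<dots> \<le> ?m * rho s' + (\<Sum>s\<in>-Sbot. mu s * kernel_pi P pol s s')"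
      by (intro add_left_mono sum_mono mult_right_mono Suc.IH kernel_nonneg[OF pol])
    also have "\<dots> = mu s'"
      by (simp add: invariant_measure_eq[OF mu, symmetric] flip: sum_kernel_split[OF pol])
    finally show ?case .
  qed
  have "?m * occupation s' = (\<Sum>k. ?m * surv P Sbot pol s0 (Suc k) s')"
    unfolding occupation_def by (rule suminf_mult[OF summable_surv, symmetric])
  also have "\<dots> \<le> mu s'"
    using partial by (intro suminf_le_const summable_mult summable_surv) (simp add: sum_distrib_left)
  finally show ?thesis .
qed

lemma invariant_measure_eq_occupation:
  assumes mu: "invariant_measure P pol mu" and mu_sum: "(\<Sum>s\<in>UNIV. mu s) = 1"
  shows "mu = (\<lambda>s. occupation s / mean_T)"
proof -
  define m where "m = (\<Sum>s\<in>Sbot. mu s)"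
  define eta where "eta s = mu s - m * occupation s" for s
  have "invariant_measure P pol eta"
    unfolding invariant_measure_def
  proof (intro conjI allI)
    show "0 \<le> eta s" for s
      using invariant_measure_ge_occupation[OF mu] by (simp add: eta_def m_def)
    fix s'
    have "(\<Sum>s\<in>UNIV. eta s * kernel_pi P pol s s') =
        (\<Sum>s\<in>UNIV. mu s * kernel_pi P pol s s') - m * (\<Sum>s\<in>UNIV. occupation s * kernel_pi P pol s s')"
      by (simp add: eta_def left_diff_distrib sum_subtractf sum_distrib_left mult.assoc)
    also have "\<dots> = eta s'"
      by (simp only: eta_def invariant_measure_eq[OF mu, symmetric]
          invariant_measure_eq[OF occupation_invariant, symmetric])
    finally show "eta s' = (\<Sum>s\<in>UNIV. eta s * kernel_pi P pol s s')" ..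
  qed
  moreover have "eta s = 0" if "s \<in> Sbot" for s
  proof -
    have "(\<Sum>s\<in>Sbot. eta s) = 0"
      using sum_occupation_terminal by (simp add: eta_def m_def sum_subtractf flip: sum_distrib_left)
    then show ?thesis
      using that \<open>invariant_measure P pol eta\<close> by (simp add: sum_nonneg_eq_0_iff invariant_measure_nonneg)
  qed
  ultimately have "eta s = 0" for s
    by (rule invariant_measure_vanishes[OF pol])
  then have "mu s = m * occupation s" for s
    by (simp add: eta_def)
  moreover have "m * mean_T = 1"
    using mu_sum by (simp add: calculation sum_occupation_UNIV flip: sum_distrib_left)
  ultimately show ?thesis
    using mean_T_pos by (simp add: fun_eq_iff field_simps)
qed

lemma stat_dist_eq_occupation: "stat_dist P pol = (\<lambda>s. occupation s / mean_T)"
  unfolding stat_dist_def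
proof (rule the_equality, intro conjI allI)
  show "0 \<le> occupation s / mean_T" for s
    using occupation_nonneg mean_T_pos by simp
  show "(\<Sum>s\<in>UNIV. occupation s / mean_T) = 1"
    using mean_T_pos by (simp add: sum_occupation_UNIV flip: sum_divide_distrib)
  show "occupation s' / mean_T = (\<Sum>s\<in>UNIV. occupation s / mean_T * kernel_pi P pol s s')" for s'
    by (subst invariant_measure_eq[OF occupation_invariant, of s']) (simp add: sum_divide_distrib)
qed (use invariant_measure_eq_occupation in \<open>unfold invariant_measure_def, blast\<close>)


section \<open>The Lagrangian at the occupation multiplier\<close>

lemma hit_prob_sums: "(\<lambda>n. hit_prob P Sbot pol s0 n s) sums (if s \<in> Sbot then occupation s else 0)"
proof -
  have "(\<lambda>n. hit_prob P Sbot pol s0 (Suc n) s) sums (if s \<in> Sbot then occupation s else 0)"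
    using summable_sums[OF summable_surv[of s]] by (simp add: hit_prob_def occupation_def)
  moreover have "hit_prob P Sbot pol s0 0 s = 0"
    by (simp add: hit_prob_def)
  ultimately show ?thesis
    using sums_Suc_iff[of "\<lambda>n. hit_prob P Sbot pol s0 n s"] by simp
qed

lemma exp_Q_T_occupation:
  "exp_Q_T P Sbot pol s0 Qb = (\<Sum>s\<in>Sbot. occupation s * (\<Sum>a\<in>UNIV. pol s a * Qb s a))"
proof -
  have "(\<lambda>n. \<Sum>s\<in>UNIV. hit_prob P Sbot pol s0 n s * (\<Sum>a\<in>UNIV. pol s a * Qb s a)) sums
      (\<Sum>s\<in>UNIV. (if s \<in> Sbot then occupation s else 0) * (\<Sum>a\<in>UNIV. pol s a * Qb s a))"
    by (intro sums_sum sums_mult2 hit_prob_sums)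
  then show ?thesis
    unfolding exp_Q_T_def by (simp add: sums_unique[symmetric] if_distrib[of "\<lambda>x. x * _"] sum.If_cases)
qed

lemma sum_occupation_bellman:
  "(\<Sum>s\<in>UNIV. \<Sum>a\<in>UNIV. occupation s * pol s a * bellman P R Sbot Qb s a) =
    (\<Sum>s\<in>UNIV. occupation s * (R s + (if s \<notin> Sbot then Max (range (Qb s)) else 0)))"
proof -
  define f where "f s' = R s' + (if s' \<notin> Sbot then Max (range (Qb s')) else 0)" for s'
  have "(\<Sum>a\<in>UNIV. occupation s * pol s a * bellman P R Sbot Qb s a) =
      (\<Sum>s'\<in>UNIV. occupation s * kernel_pi P pol s s' * f s')" for s
    unfolding bellman_def kernel_pi_def f_def[symmetric]
    by (simp add: sum_distrib_left sum_distrib_right mult_ac) (rule sum.swap)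
  then have "(\<Sum>s\<in>UNIV. \<Sum>a\<in>UNIV. occupation s * pol s a * bellman P R Sbot Qb s a) =
      (\<Sum>s'\<in>UNIV. (\<Sum>s\<in>UNIV. occupation s * kernel_pi P pol s s') * f s')"
    by (simp add: sum_distrib_right) (rule sum.swap)
  also have "\<dots> = (\<Sum>s'\<in>UNIV. occupation s' * f s')"
    by (simp only: invariant_measure_eq[OF occupation_invariant, symmetric])
  finally show ?thesis by (simp add: f_def)
qed

lemma lagr_occupation:
  "lagr P R Sbot s0 pol Qb (\<lambda>s a. occupation s * pol s a) =
    (\<Sum>s\<in>UNIV. occupation s * R s) +
    (\<Sum>s\<in>-Sbot. \<Sum>a\<in>UNIV. occupation s * pol s a * (Max (range (Qb s)) - Qb s a))"
proof -
  define V where "V s = (\<Sum>a\<in>UNIV. pol s a * Qb s a)" for s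
  have pol_sum: "(\<Sum>a\<in>UNIV. pol s a) = 1" for s
    using pol by (simp add: stoch_policy_def)
  have V_sum: "(\<Sum>a\<in>UNIV. occupation s * pol s a * Qb s a) = occupation s * V s" for s
    by (simp add: V_def sum_distrib_left mult.assoc)
  have gap: "(\<Sum>a\<in>UNIV. occupation s * pol s a * (Max (range (Qb s)) - Qb s a)) =
      occupation s * Max (range (Qb s)) - occupation s * V s" for s
    by (simp add: right_diff_distrib sum_subtractf V_sum pol_sum flip: sum_distrib_left sum_distrib_right)
  have "lagr P R Sbot s0 pol Qb (\<lambda>s a. occupation s * pol s a) =
      (\<Sum>s\<in>Sbot. occupation s * V s) +
      (\<Sum>s\<in>UNIV. \<Sum>a\<in>UNIV. occupation s * pol s a * bellman P R Sbot Qb s a) -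
      (\<Sum>s\<in>UNIV. \<Sum>a\<in>UNIV. occupation s * pol s a * Qb s a)"
    by (simp add: lagr_def exp_Q_T_occupation V_def right_diff_distrib sum_subtractf)
  also have "\<dots> = (\<Sum>s\<in>UNIV. occupation s * R s) +
      (\<Sum>s\<in>-Sbot. occupation s * Max (range (Qb s)) - occupation s * V s)"
    by (simp add: sum_occupation_bellman V_sum sum_UNIV_split[of _ Sbot] distrib_left sum.distrib
        sum_subtractf)
  finally show ?thesis
    by (simp add: gap)
qed

lemma lagr_multiplier_maximal_iff:
  "(\<forall>lb. (\<forall>s a. 0 \<le> lb s a) \<longrightarrow>
      lagr P R Sbot s0 pol Q lb \<le> lagr P R Sbot s0 pol Q (\<lambda>s a. occupation s * pol s a))
   \<longleftrightarrow> (\<forall>s a. bellman P R Sbot Q s a - Q s a \<le> 0) \<and>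
       (\<forall>s a. occupation s * pol s a * (bellman P R Sbot Q s a - Q s a) = 0)"
proof -
  have "0 \<le> occupation s * pol s a" for s a
    using occupation_nonneg pol by (simp add: stoch_policy_def)
  then show ?thesis
    unfolding lagr_def by (simp add: nonneg_multipliers_maximal_iff)
qed

lemma lagr_value_minimal_iff:
  "(\<forall>Qb. lagr P R Sbot s0 pol Q (\<lambda>s a. occupation s * pol s a) \<le>
      lagr P R Sbot s0 pol Qb (\<lambda>s a. occupation s * pol s a))
   \<longleftrightarrow> (\<forall>s a. s \<notin> Sbot \<longrightarrow> occupation s * pol s a * (Max (range (Q s)) - Q s a) = 0)"
proof -
  define gap where "gap Qb =
    (\<Sum>s\<in>-Sbot. \<Sum>a\<in>UNIV. occupation s * pol s a * (Max (range (Qb s)) - Qb s a))"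
    for Qb :: "'s \<Rightarrow> 'a \<Rightarrow> real"
  have gap_term_nonneg: "0 \<le> occupation s * pol s a * (Max (range (Qb s)) - Qb s a)" for Qb s a
    using occupation_nonneg[of s] pol by (simp add: stoch_policy_def)
  then have gap_nonneg: "0 \<le> gap Qb" for Qb
    unfolding gap_def by (intro sum_nonneg)
  have gap_zero: "gap (\<lambda>_ _. 0) = 0"
    by (simp add: gap_def)
  have "(\<forall>Qb. lagr P R Sbot s0 pol Q (\<lambda>s a. occupation s * pol s a) \<le>
      lagr P R Sbot s0 pol Qb (\<lambda>s a. occupation s * pol s a)) \<longleftrightarrow> (\<forall>Qb. gap Q \<le> gap Qb)"
    by (simp add: lagr_occupation gap_def)
  also have "\<dots> \<longleftrightarrow> gap Q = 0"
    using gap_nonneg gap_zero by (metis antisym)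
  also have "\<dots> \<longleftrightarrow> (\<forall>s a. s \<notin> Sbot \<longrightarrow> occupation s * pol s a * (Max (range (Q s)) - Q s a) = 0)"
    unfolding gap_def using gap_term_nonneg by (subst sum_sum_nonneg_eq_0_iff) auto
  finally show ?thesis .
qed

end

theorem mainTheorem7:
  fixes P :: "'s::finite \<Rightarrow> 'a::finite \<Rightarrow> 's \<Rightarrow> real"
    and R :: "'s \<Rightarrow> real" and rho :: "'s \<Rightarrow> real" and Sbot :: "'s set" and s0 :: 's
    and Q :: "'s \<Rightarrow> 'a \<Rightarrow> real" and pol :: "'s \<Rightarrow> 'a \<Rightarrow> real"
  assumes "elp P rho Sbot s0"
    and "stoch_policy pol"
  defines "rho_pi \<equiv> (\<lambda>s a. stat_dist P pol s * pol s a)"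
  defines "lam_pi \<equiv> (\<lambda>s a. rho_pi s a * exp_T P Sbot pol s0)"
  shows "(\<forall>Qb lb. (\<forall>s a. 0 \<le> lb s a) \<longrightarrow>
            lagr P R Sbot s0 pol Q lb \<le> lagr P R Sbot s0 pol Q lam_pi \<and>
            lagr P R Sbot s0 pol Q lam_pi \<le> lagr P R Sbot s0 pol Qb lam_pi)
     \<longleftrightarrow>
         ((\<forall>s a. bellman P R Sbot Q s a - Q s a \<le> 0) \<and>
          (\<forall>s a. rho_pi s a * (bellman P R Sbot Q s a - Q s a) = 0) \<and>
          (\<forall>s a. s \<notin> Sbot \<longrightarrow> rho_pi s a * (Max (range (Q s)) - Q s a) = 0))"
proof -
  interpret finite_elp_policy P rho Sbot s0 pol
    using assms(1,2) by unfold_locales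
  have lam_pi: "lam_pi = (\<lambda>s a. occupation s * pol s a)"
    using mean_T_pos by (simp add: lam_pi_def rho_pi_def stat_dist_eq_occupation fun_eq_iff)
  have rho_pi_eq_0_iff: "rho_pi s a * x = 0 \<longleftrightarrow> occupation s * pol s a * x = 0" for s a x
    using mean_T_pos by (simp add: rho_pi_def stat_dist_eq_occupation)
  have "\<exists>lb. \<forall>s a. 0 \<le> (lb s a :: real)"
    by (rule exI[of _ "\<lambda>_ _. 0"]) simp
  then have "(\<forall>Qb lb. (\<forall>s a. 0 \<le> lb s a) \<longrightarrow>
            lagr P R Sbot s0 pol Q lb \<le> lagr P R Sbot s0 pol Q lam_pi \<and>
            lagr P R Sbot s0 pol Q lam_pi \<le> lagr P R Sbot s0 pol Qb lam_pi) \<longleftrightarrow>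
      (\<forall>lb. (\<forall>s a. 0 \<le> lb s a) \<longrightarrow> lagr P R Sbot s0 pol Q lb \<le> lagr P R Sbot s0 pol Q lam_pi) \<and>
      (\<forall>Qb. lagr P R Sbot s0 pol Q lam_pi \<le> lagr P R Sbot s0 pol Qb lam_pi)"
    by blast
  then show ?thesis
    unfolding lam_pi lagr_multiplier_maximal_iff lagr_value_minimal_iff rho_pi_eq_0_iff
    by (simp only: conj_assoc)
qed

end
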